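(* For $\alpha\in\mathbb{R}\setminus\{0\}$ let $$P_{-2}=\frac{uz}{2},\quad P_{-1}=\frac{u-y-2\alpha(yu+uz-y)}{2\alpha},\quad P_0=\frac{u(\alpha x+4\alpha y+\alpha z-2)+2(\alpha-2\alpha y+y)}{2\alpha},$$ $$P_1=\frac{u-y-2\alpha(xu+yu-y)}{2\alpha},\quad P_2=\frac{xu}{2},$$ and let $\gamma_\alpha=\sup\{\delta\ge0:\ P_i(x,y,z,u)\ge0\ \text{for all } -2\le i\le2 \text{ and all }(x,y,z,u)\in[0,\delta]^4\}$. Then $\gamma_\alpha=\frac12$ for $\alpha\in[\frac12,1]$, and $\gamma_\alpha<\frac12$ for $0\ne\alpha<\frac12$ and for $\alpha>1$.
   Context: These are the positivity polynomials of the two-stage second-order explicit Runge--Kutta method with $a_{21}=\alpha$, $b=(1-\frac1{2\alpha},\frac1{2\alpha})$, applied to the semi-discretized heat equation $u_k'=q_k\,(u_{k-1}-2u_k+u_{k+1})/(\Delta x)^2$ with periodic indices and $q_k\ge0$: one step gives $u^{n+1}_k=\sum_{i=-2}^2P_iu^n_{k-i}$, where $x=\xi^1_{k-1}$, $y=\xi^1_k$, $z=\xi^1_{k+1}$, $u=\xi^2_k$ and $\xi^j_\ell=\Delta t\,q_\ell/(\Delta x)^2$ are treated as independent variables. *)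

theory Defs
  imports Complex_Main
begin

text \<open>Positivity polynomials P_{-2},...,P_2 of the two-stage second-order explicit RK method.
  Index i ranges over the integers -2..2.\<close>

definition Ppos :: "real \<Rightarrow> int \<Rightarrow> real \<Rightarrow> real \<Rightarrow> real \<Rightarrow> real \<Rightarrow> real" where
  "Ppos \<alpha> i x y z u =
    (if i = -2 then u * z / 2
     else if i = -1 then (u - y - 2 * \<alpha> * (y * u + u * z - y)) / (2 * \<alpha>)
     else if i = 0 then (u * (\<alpha> * x + 4 * \<alpha> * y + \<alpha> * z - 2) + 2 * (\<alpha> - 2 * \<alpha> * y + y)) / (2 * \<alpha>)
     else if i = 1 then (u - y - 2 * \<alpha> * (x * u + y * u - y)) / (2 * \<alpha>)
     else if i = 2 then x * u / 2
     else 0)"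

definition gamma :: "real \<Rightarrow> real" where
  "gamma \<alpha> = Sup {\<delta>::real. \<delta> \<ge> 0 \<and>
     (\<forall>i::int. -2 \<le> i \<and> i \<le> 2 \<longrightarrow>
       (\<forall>x y z u. x \<in> {0..\<delta>} \<and> y \<in> {0..\<delta>} \<and> z \<in> {0..\<delta>} \<and> u \<in> {0..\<delta>}
          \<longrightarrow> Ppos \<alpha> i x y z u \<ge> 0))}"

end

theory Submission
  imports Defs
begin

text \<open>For \<open>\<alpha> \<in> [1/2, 1]\<close> the numerators of the \<open>P\<^sub>i\<close> on \<open>[0, 1/2]\<^sup>4\<close> are sums of
  products of nonnegative factors (bilinear interpolation between the corners in \<open>u, y\<close>), so
  \<open>\<gamma>\<^sub>\<alpha> \<ge> 1/2\<close>. Conversely \<open>P\<^sub>-\<^sub>1\<close> alone bounds \<open>\<gamma>\<^sub>\<alpha>\<close>: at \<open>(\<delta>,\<delta>,\<delta>,\<delta>)\<close> its numerator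
  is \<open>-2\<alpha>\<delta>(2\<delta>-1)\<close>, giving \<open>\<delta> \<le> 1/2\<close>; at \<open>(0,\<delta>,0,0)\<close> it is \<open>\<delta>(2\<alpha>-1)\<close>, excluding
  \<open>0 < \<alpha> < 1/2\<close>; at \<open>(0,0,\<delta>,\<delta>)\<close> it is \<open>\<delta>(1-2\<alpha>\<delta>)\<close>, excluding \<open>\<alpha> < 0\<close> and giving
  \<open>\<delta> \<le> 1/(2\<alpha>)\<close>.\<close>

definition nonneg_on_cube :: "real \<Rightarrow> real \<Rightarrow> bool" where
  "nonneg_on_cube \<alpha> \<delta> \<longleftrightarrow>
     (\<forall>i::int. -2 \<le> i \<and> i \<le> 2 \<longrightarrow>
       (\<forall>x y z u. x \<in> {0..\<delta>} \<and> y \<in> {0..\<delta>} \<and> z \<in> {0..\<delta>} \<and> u \<in> {0..\<delta>}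
          \<longrightarrow> Ppos \<alpha> i x y z u \<ge> 0))"

lemma gamma_eq_Sup_nonneg_on_cube: "gamma \<alpha> = Sup {\<delta>. 0 \<le> \<delta> \<and> nonneg_on_cube \<alpha> \<delta>}"
  unfolding gamma_def nonneg_on_cube_def by simp

lemma nonneg_on_cubeD:
  "nonneg_on_cube \<alpha> \<delta> \<Longrightarrow> -2 \<le> i \<Longrightarrow> i \<le> 2 \<Longrightarrow> x \<in> {0..\<delta>} \<Longrightarrow> y \<in> {0..\<delta>}
    \<Longrightarrow> z \<in> {0..\<delta>} \<Longrightarrow> u \<in> {0..\<delta>} \<Longrightarrow> Ppos \<alpha> i x y z u \<ge> 0"
  unfolding nonneg_on_cube_def by blast

lemma Ppos_minus1: "Ppos \<alpha> (-1) x y z u = (u - y - 2 * \<alpha> * (y * u + u * z - y)) / (2 * \<alpha>)"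
  by (simp add: Ppos_def)

lemma Ppos_reflect: "Ppos \<alpha> (-i) x y z u = Ppos \<alpha> i z y x u"
  by (auto simp: Ppos_def algebra_simps)

lemma nonneg_on_cube_zero: "nonneg_on_cube \<alpha> 0"
  unfolding nonneg_on_cube_def by (auto simp: Ppos_def)

lemma gamma_le:
  assumes "\<And>\<delta>. 0 \<le> \<delta> \<Longrightarrow> nonneg_on_cube \<alpha> \<delta> \<Longrightarrow> \<delta> \<le> b"
  shows "gamma \<alpha> \<le> b"
  unfolding gamma_eq_Sup_nonneg_on_cube
  using nonneg_on_cube_zero assms by (intro cSup_least) auto

lemma minus1_numerator_nonneg:
  fixes \<alpha> y z u :: real
  assumes "1/2 \<le> \<alpha>" "\<alpha> \<le> 1" "y \<in> {0..1/2}" "z \<in> {0..1/2}" "u \<in> {0..1/2}"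
  shows "0 \<le> u - y - 2 * \<alpha> * (y * u + u * z - y)"
proof -
  have "u - y - 2 * \<alpha> * (y * u + u * z - y)
      = u * (1 - \<alpha>) * (1 - 2 * y) + y * (2 * \<alpha> - 1) * (1 - 2 * u) + \<alpha> * u * (1 - 2 * z)"
    by (simp add: algebra_simps)
  also have "0 \<le> \<dots>"
    using assms by (intro add_nonneg_nonneg mult_nonneg_nonneg) auto
  finally show ?thesis .
qed

lemma zero_numerator_nonneg:
  fixes \<alpha> x y z u :: real
  assumes "1/2 \<le> \<alpha>" "\<alpha> \<le> 1" "x \<ge> 0" "y \<in> {0..1/2}" "z \<ge> 0" "u \<in> {0..1/2}"
  shows "0 \<le> u * (\<alpha> * x + 4 * \<alpha> * y + \<alpha> * z - 2) + 2 * (\<alpha> - 2 * \<alpha> * y + y)"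
proof -
  define s t where "s = 2 * u" and "t = 2 * y"
  have "u * (\<alpha> * x + 4 * \<alpha> * y + \<alpha> * z - 2) + 2 * (\<alpha> - 2 * \<alpha> * y + y)
      = (1 - s) * (1 - t) * (2 * \<alpha>) + s * (1 - t) * (2 * \<alpha> - 1) + (1 - s) * t + s * t * \<alpha>
        + \<alpha> * u * (x + z)"
    by (simp add: s_def t_def algebra_simps)
  also have "0 \<le> \<dots>"
    using assms by (intro add_nonneg_nonneg mult_nonneg_nonneg) (auto simp: s_def t_def)
  finally show ?thesis .
qed

lemma nonneg_on_cube_half:
  assumes "1/2 \<le> \<alpha>" "\<alpha> \<le> 1"
  shows "nonneg_on_cube \<alpha> (1/2)"
  unfolding nonneg_on_cube_def
proof (intro allI impI, elim conjE)
  fix i :: int and x y z u :: real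
  assume "-2 \<le> i" "i \<le> 2" and cube: "x \<in> {0..1/2}" "y \<in> {0..1/2}" "z \<in> {0..1/2}" "u \<in> {0..1/2}"
  have \<alpha>_pos: "0 < \<alpha>" using assms by simp
  have minus1: "0 \<le> Ppos \<alpha> (-1) x' y z' u" if "x' \<in> {0..1/2}" "z' \<in> {0..1/2}" for x' z'
    using minus1_numerator_nonneg[OF assms cube(2) that(2) cube(4)] \<alpha>_pos
    by (simp add: Ppos_minus1)
  have "i \<in> {-2, -1, 0, 1, 2}" using \<open>-2 \<le> i\<close> \<open>i \<le> 2\<close> by auto
  then show "0 \<le> Ppos \<alpha> i x y z u"
  proof (elim insertE emptyE)
    assume "i = 1"
    then show ?thesis using minus1[OF cube(3) cube(1)] Ppos_reflect[of \<alpha> 1] by simp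
  next
    assume "i = 0"
    then show ?thesis
      using zero_numerator_nonneg[OF assms, of x y z u] cube \<alpha>_pos by (simp add: Ppos_def)
  qed (use cube minus1 in \<open>auto simp: Ppos_def\<close>)
qed

lemma nonneg_on_cube_le_half:
  assumes "0 < \<alpha>" "0 \<le> \<delta>" "nonneg_on_cube \<alpha> \<delta>"
  shows "\<delta> \<le> 1/2"
proof -
  have "0 \<le> Ppos \<alpha> (-1) \<delta> \<delta> \<delta> \<delta>"
    using nonneg_on_cubeD[OF assms(3)] assms(2) by simp
  then have "0 \<le> - (2 * \<alpha>) * (\<delta> * (2 * \<delta> - 1))"
    using assms(1) by (simp add: Ppos_minus1 zero_le_divide_iff algebra_simps)
  then have "\<delta> * (2 * \<delta> - 1) \<le> 0"
    using assms(1) by (simp add: mult_le_0_iff zero_le_mult_iff)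
  then show ?thesis using assms(2) by (auto simp: mult_le_0_iff)
qed

lemma nonneg_on_cube_le_inverse:
  assumes "\<alpha> \<noteq> 0" "0 < \<delta>" "nonneg_on_cube \<alpha> \<delta>"
  shows "0 < \<alpha>" "\<delta> \<le> 1 / (2 * \<alpha>)"
proof -
  have "0 \<le> Ppos \<alpha> (-1) 0 0 \<delta> \<delta>"
    using nonneg_on_cubeD[OF assms(3)] assms(2) by simp
  then have "0 \<le> (\<delta> * (1 - 2 * \<alpha> * \<delta>)) / (2 * \<alpha>)"
    by (simp add: Ppos_minus1 algebra_simps)
  moreover have "\<delta> * (1 - 2 * \<alpha> * \<delta>) > 0" if "\<alpha> < 0"
    using mult_neg_pos[OF that assms(2)] assms(2) by simp
  ultimately show "0 < \<alpha>"
    using assms(1) by (cases "\<alpha> < 0") (auto simp: zero_le_divide_iff)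
  with \<open>0 \<le> (\<delta> * (1 - 2 * \<alpha> * \<delta>)) / (2 * \<alpha>)\<close> have "2 * \<alpha> * \<delta> \<le> 1"
    using assms(2) by (simp add: zero_le_divide_iff zero_le_mult_iff)
  then show "\<delta> \<le> 1 / (2 * \<alpha>)"
    using \<open>0 < \<alpha>\<close> by (simp add: field_simps)
qed

lemma nonneg_on_cube_alpha_ge_half:
  assumes "\<alpha> \<noteq> 0" "0 < \<delta>" "nonneg_on_cube \<alpha> \<delta>"
  shows "1/2 \<le> \<alpha>"
proof -
  have "0 < \<alpha>" using nonneg_on_cube_le_inverse[OF assms] by simp
  have "0 \<le> Ppos \<alpha> (-1) 0 \<delta> 0 0"
    using nonneg_on_cubeD[OF assms(3)] assms(2) by simp
  then have "0 \<le> \<delta> * (2 * \<alpha> - 1)"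
    using \<open>0 < \<alpha>\<close> by (simp add: Ppos_minus1 zero_le_divide_iff algebra_simps)
  then show ?thesis using assms(2) by (simp add: zero_le_mult_iff)
qed

theorem proposition9:
  shows "(\<forall>\<alpha>::real. 1/2 \<le> \<alpha> \<and> \<alpha> \<le> 1 \<longrightarrow> gamma \<alpha> = 1/2)
       \<and> (\<forall>\<alpha>::real. (\<alpha> \<noteq> 0 \<and> \<alpha> < 1/2) \<or> \<alpha> > 1 \<longrightarrow> gamma \<alpha> < 1/2)"
proof (intro conjI allI impI)
  fix \<alpha> :: real assume \<alpha>: "1/2 \<le> \<alpha> \<and> \<alpha> \<le> 1"
  then have "0 < \<alpha>" by simp
  with \<alpha> show "gamma \<alpha> = 1/2"
    unfolding gamma_eq_Sup_nonneg_on_cube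
    using nonneg_on_cube_half nonneg_on_cube_le_half[OF \<open>0 < \<alpha>\<close>]
    by (intro cSup_eq_maximum) auto
next
  fix \<alpha> :: real assume \<alpha>: "(\<alpha> \<noteq> 0 \<and> \<alpha> < 1/2) \<or> \<alpha> > 1"
  show "gamma \<alpha> < 1/2"
  proof (cases "\<alpha> > 1")
    case True
    have "gamma \<alpha> \<le> 1 / (2 * \<alpha>)"
      using True nonneg_on_cube_le_inverse(2)[of \<alpha>]
      by (intro gamma_le) (fastforce simp: le_less)
    also have "\<dots> < 1/2" using True by (simp add: field_simps)
    finally show ?thesis .
  next
    case False
    with \<alpha> have "gamma \<alpha> \<le> 0"
      using nonneg_on_cube_alpha_ge_half[of \<alpha>] by (intro gamma_le) (fastforce simp: le_less)
    then show ?thesis by simp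
  qed
qed

end
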